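(* Let $q\ge 0$ and $d$ be integers with $2\le d\le 4+6q$. Then $\frac{3}{d+3}\le f(2,d)\le \frac{3}{d+1+\frac{1}{q+1}}$.
   Context: For a graph $G=(V,E)$ and an integer $k\ge 0$, a $k$-independent set is a set $S\subseteq V$ such that the induced subgraph $G[S]$ has maximum degree at most $k$; $\alpha_k(G)$ denotes the maximum cardinality of a $k$-independent set of $G$. $n(G)$ is the number of vertices and $d(G)=2|E(G)|/n(G)$ the average degree. For integers $d,k\ge 0$, $f(k,d)=\inf\left\{\frac{\alpha_k(G)}{n(G)} : G \text{ a finite simple graph with at least one vertex and } d(G)\le d\right\}$. *)

theory Defs
  imports Complex_Main
begin

text \<open>A finite simple graph is represented by a finite vertex set V of naturals
 (every finite graph is isomorphic to one of these) and a set E of edges, each edge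
 being a 2-element subset of V.\<close>

definition simple_graph :: "nat set \<Rightarrow> nat set set \<Rightarrow> bool" where
  "simple_graph V E \<longleftrightarrow> finite V \<and> (\<forall>e\<in>E. e \<subseteq> V \<and> card e = 2)"

definition k_independent :: "nat set \<Rightarrow> nat set set \<Rightarrow> nat \<Rightarrow> nat set \<Rightarrow> bool" where
  "k_independent V E k S \<longleftrightarrow> S \<subseteq> V \<and> (\<forall>v\<in>S. card {u\<in>S. {u, v} \<in> E} \<le> k)"

definition alpha_k :: "nat set \<Rightarrow> nat set set \<Rightarrow> nat \<Rightarrow> nat" where
  "alpha_k V E k = Max (card ` {S. k_independent V E k S})"

definition avg_degree :: "nat set \<Rightarrow> nat set set \<Rightarrow> real" where
  "avg_degree V E = 2 * real (card E) / real (card V)"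

definition f_ratio :: "nat \<Rightarrow> real \<Rightarrow> real" where
  "f_ratio k d = Inf {real (alpha_k V E k) / real (card V) | V E.
      simple_graph V E \<and> V \<noteq> {} \<and> avg_degree V E \<le> d}"

end

theory Submission
  imports Defs
begin

(* Lower bound (for every k): every simple graph G with n vertices and m edges has
   alpha_k G >= (k+1) n^2 / (2m + (k+1) n).  A potential-function argument yields a
   k-independent set S such that every vertex outside S has at least k+1 neighbours
   in S; hence the rest T = V - S spans at most m - (k+1)|T| edges, and induction on
   |V| applied to G[T] together with alpha_k G >= |S| gives the bound.  Rewritten with
   the average degree this is f(k,d) >= (k+1)/(d+k+1), i.e. 3/(d+3) for k = 2.
   Upper bound: take q copies of K_{d+1} and one copy of K_{d+2}, each with the edges
   of a triangle removed.  A 2-independent set meets each such block in at most three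
   vertices, so alpha_2 <= 3(q+1), while n = (d+1)(q+1)+1 and the hypothesis
   d <= 4+6q makes the average degree at most d. *)

definition edges_in :: "nat set set \<Rightarrow> nat set \<Rightarrow> nat" where
  "edges_in E X = card {e\<in>E. e \<subseteq> X}"

definition deg_in :: "nat set set \<Rightarrow> nat set \<Rightarrow> nat \<Rightarrow> nat" where
  "deg_in E X v = card {u\<in>X. {u, v} \<in> E}"

lemma k_independent_iff_deg_in:
  "k_independent V E k S \<longleftrightarrow> S \<subseteq> V \<and> (\<forall>v\<in>S. deg_in E S v \<le> k)"
  by (simp add: k_independent_def deg_in_def)

lemma edges_in_empty:
  assumes "\<forall>e\<in>E. card e = 2"
  shows "edges_in E {} = 0"
  using assms by (auto simp: edges_in_def)

lemma edges_in_insert: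
  assumes E2: "\<forall>e\<in>E. card e = 2" and fX: "finite X" and wX: "w \<notin> X"
  shows "edges_in E (insert w X) = edges_in E X + deg_in E X w"
proof -
  let ?new = "(\<lambda>u. {u, w}) ` {u\<in>X. {u, w} \<in> E}"
  have split: "{e\<in>E. e \<subseteq> insert w X} = {e\<in>E. e \<subseteq> X} \<union> ?new"
  proof (intro equalityI subsetI)
    fix e assume e: "e \<in> {e\<in>E. e \<subseteq> insert w X}"
    then have "card e = 2" using E2 by simp
    then obtain a b where ab: "e = {a, b}" "a \<noteq> b" by (meson card_2_iff)
    show "e \<in> {e\<in>E. e \<subseteq> X} \<union> ?new"
    proof (cases "w \<in> e")
      case True
      then have "e = {b, w} \<and> b \<in> X \<or> e = {a, w} \<and> a \<in> X"
        using ab e by auto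
      then show ?thesis using e by auto
    qed (use e in auto)
  qed auto
  have fin_old: "finite {e\<in>E. e \<subseteq> X}"
    by (rule finite_subset[of _ "Pow X"]) (auto simp: fX)
  have inj: "inj_on (\<lambda>u. {u, w}) {u\<in>X. {u, w} \<in> E}"
    by (rule inj_onI) (use wX in \<open>auto simp: doubleton_eq_iff\<close>)
  have "edges_in E (insert w X) = card {e\<in>E. e \<subseteq> X} + card ?new"
    unfolding edges_in_def split
    by (rule card_Un_disjoint) (use fin_old fX wX in auto)
  also have "card ?new = deg_in E X w"
    unfolding deg_in_def by (rule card_image[OF inj])
  finally show ?thesis by (simp add: edges_in_def)
qed

lemma deg_in_union:
  assumes "finite S" "finite T" "S \<inter> T = {}"
  shows "deg_in E (S \<union> T) w = deg_in E S w + deg_in E T w"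
proof -
  have "{u\<in>S \<union> T. {u, w} \<in> E} = {u\<in>S. {u, w} \<in> E} \<union> {u\<in>T. {u, w} \<in> E}" by auto
  then show ?thesis unfolding deg_in_def using assms by (simp add: card_Un_disjoint disjoint_iff)
qed

lemma edges_in_dominated:
  assumes E2: "\<forall>e\<in>E. card e = 2" and fS: "finite S" and fT: "finite T"
    and disj: "S \<inter> T = {}" and dom: "\<forall>w\<in>T. K \<le> deg_in E S w"
  shows "edges_in E T + K * card T \<le> edges_in E (S \<union> T)"
  using fT disj dom
proof (induction T rule: finite_induct)
  case empty
  then show ?case using edges_in_empty[OF E2] by simp
next
  case (insert w F)
  have "edges_in E (insert w F) = edges_in E F + deg_in E F w"
    by (rule edges_in_insert[OF E2 insert(1,2)])
  moreover have "edges_in E (S \<union> insert w F) = edges_in E (S \<union> F) + deg_in E (S \<union> F) w"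
    using edges_in_insert[OF E2, of "S \<union> F" w] fS insert(1,2,4) by auto
  moreover have "deg_in E (S \<union> F) w = deg_in E S w + deg_in E F w"
    by (rule deg_in_union) (use fS insert in auto)
  moreover have "K \<le> deg_in E S w" using insert.prems by auto
  ultimately show ?case using insert by simp
qed

lemma finite_card_k_independent: "finite V \<Longrightarrow> finite (card ` {S. k_independent V E k S})"
  by (rule finite_imageI, rule finite_subset[of _ "Pow V"]) (auto simp: k_independent_def)

lemma card_le_alpha_k: "finite V \<Longrightarrow> k_independent V E k S \<Longrightarrow> card S \<le> alpha_k V E k"
  unfolding alpha_k_def by (rule Max_ge[OF finite_card_k_independent]) auto

lemma alpha_k_attained:
  assumes "finite V"
  obtains S where "k_independent V E k S" "card S = alpha_k V E k"
proof -
  have "{} \<in> {S. k_independent V E k S}" by (simp add: k_independent_def)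
  then have "alpha_k V E k \<in> card ` {S. k_independent V E k S}"
    unfolding alpha_k_def by (intro Max_in[OF finite_card_k_independent[OF assms]]) auto
  then show ?thesis using that by auto
qed

lemma alpha_k_le:
  "finite V \<Longrightarrow> (\<And>S. k_independent V E k S \<Longrightarrow> card S \<le> B) \<Longrightarrow> alpha_k V E k \<le> B"
  by (metis alpha_k_attained)

text \<open>A k-independent set of an induced subgraph is k-independent in the whole graph.\<close>
lemma alpha_k_induced_le:
  assumes "finite V" "T \<subseteq> V"
  shows "alpha_k T {e\<in>E. e \<subseteq> T} k \<le> alpha_k V E k"
proof -
  have fT: "finite T" using assms finite_subset by blast
  obtain X where X: "k_independent T {e\<in>E. e \<subseteq> T} k X" "card X = alpha_k T {e\<in>E. e \<subseteq> T} k"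
    using alpha_k_attained[OF fT] .
  then have XT: "X \<subseteq> T" by (simp add: k_independent_def)
  then have "{u\<in>X. {u, v} \<in> {e\<in>E. e \<subseteq> T}} = {u\<in>X. {u, v} \<in> E}" if "v \<in> X" for v
    using that by auto
  then have "k_independent V E k X"
    using X(1) XT assms(2) unfolding k_independent_def by auto
  then show ?thesis using card_le_alpha_k[OF assms(1)] X(2) by metis
qed

section \<open>The lower bound\<close>

text \<open>S maximises the potential (n+1)((k+1)|X| - e(X)) - |X| over all X \<subseteq> V: adding a
  vertex with at most k neighbours in S, or deleting a vertex of S with more than k
  neighbours in S, would increase it.\<close>
lemma exists_dominating_k_independent:
  assumes fV: "finite V" and E2: "\<forall>e\<in>E. card e = 2"
  obtains S where "k_independent V E k S" "\<forall>w\<in>V - S. k + 1 \<le> deg_in E S w"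
proof -
  define \<mu> :: "nat set \<Rightarrow> int" where
    "\<mu> X = (int (card V) + 1) * ((int k + 1) * int (card X) - int (edges_in E X)) - int (card X)"
    for X
  have fin: "finite (\<mu> ` Pow V)" using fV by simp
  have "Max (\<mu> ` Pow V) \<in> \<mu> ` Pow V" using fin by (intro Max_in) auto
  then obtain S where SV: "S \<subseteq> V" and S_is_max: "\<mu> S = Max (\<mu> ` Pow V)" by auto
  have S_max: "\<mu> X \<le> \<mu> S" if "X \<subseteq> V" for X
    unfolding S_is_max using that by (intro Max_ge[OF fin]) auto
  have fS: "finite S" using SV fV finite_subset by blast
  have dominating: "k + 1 \<le> deg_in E S w" if w: "w \<in> V - S" for w
  proof (rule ccontr)
    assume "\<not> k + 1 \<le> deg_in E S w"
    then have small: "int (deg_in E S w) \<le> int k" by simp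
    have "\<mu> (insert w S) = \<mu> S + (int (card V) + 1) * (int k + 1 - int (deg_in E S w)) - 1"
      using w fS by (simp add: \<mu>_def edges_in_insert[OF E2] algebra_simps)
    moreover have "(int (card V) + 1) * (int k + 1 - int (deg_in E S w)) \<ge> int (card V) + 1"
      using small by simp
    moreover have "\<mu> (insert w S) \<le> \<mu> S" using w SV by (intro S_max) auto
    moreover have "0 < card V" using w fV card_gt_0_iff by blast
    ultimately show False by linarith
  qed
  have sparse: "deg_in E S v \<le> k" if v: "v \<in> S" for v
  proof (rule ccontr)
    assume "\<not> deg_in E S v \<le> k"
    then have big: "int k + 1 \<le> int (deg_in E S v)" by simp
    define X where "X = S - {v}"
    have fX: "finite X" and vX: "v \<notin> X" using fS by (auto simp: X_def)
    have S_eq: "S = insert v X" using v by (auto simp: X_def)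
    have "{v, v} \<notin> E" using E2 by force
    then have "{u\<in>X. {u, v} \<in> E} = {u\<in>S. {u, v} \<in> E}" by (auto simp: X_def)
    then have edges_S: "edges_in E S = edges_in E X + deg_in E S v"
      using edges_in_insert[OF E2 fX vX] S_eq by (simp add: deg_in_def)
    have card_S: "card S = card X + 1" using fX vX S_eq by simp
    have "\<mu> X = \<mu> S + (int (card V) + 1) * (int (deg_in E S v) - int k - 1) + 1"
      unfolding \<mu>_def edges_S card_S by (simp add: algebra_simps)
    moreover have "(int (card V) + 1) * (int (deg_in E S v) - int k - 1) \<ge> 0" using big by simp
    moreover have "\<mu> X \<le> \<mu> S" using SV by (intro S_max) (auto simp: X_def)
    ultimately show False by linarith
  qed
  show ?thesis
    using that[of S] SV sparse dominating unfolding k_independent_iff_deg_in by blast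
qed

text \<open>The arithmetic of the induction step below: the bound for G[T] (x vertices of S
  removed, at least K t edges lost) and alpha \<ge> |S| = x combine to the bound for G.\<close>
lemma lower_bound_step:
  fixes K A x t m m' :: nat
  assumes IH: "K * t^2 \<le> A * (2 * m' + K * t)" and edges: "m' + K * t \<le> m" and x: "x \<le> A"
  shows "K * (x + t)^2 \<le> A * (2 * m + K * (x + t))"
proof -
  have "K * (x + t)^2 = K * t^2 + x * (2 * K * t + K * x)"
    by (simp add: power2_eq_square algebra_simps)
  also have "\<dots> \<le> A * (2 * m' + K * t) + A * (2 * K * t + K * x)"
    using IH x by (intro add_mono mult_right_mono) auto
  also have "\<dots> = A * ((2 * m' + 2 * K * t) + K * (x + t))" by (simp add: algebra_simps)
  also have "\<dots> \<le> A * (2 * m + K * (x + t))" using edges by (intro mult_left_mono) auto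
  finally show ?thesis .
qed

theorem alpha_k_lower_bound:
  assumes "simple_graph V E"
  shows "(k + 1) * card V ^ 2 \<le> alpha_k V E k * (2 * card E + (k + 1) * card V)"
  using assms
proof (induction "card V" arbitrary: V E rule: less_induct)
  case less
  have fV: "finite V" and E2: "\<forall>e\<in>E. card e = 2" and EV: "\<forall>e\<in>E. e \<subseteq> V"
    using less.prems by (auto simp: simple_graph_def)
  obtain S where S: "k_independent V E k S" and dom: "\<forall>w\<in>V - S. k + 1 \<le> deg_in E S w"
    using exists_dominating_k_independent[OF fV E2] .
  have SV: "S \<subseteq> V" using S by (simp add: k_independent_def)
  have fS: "finite S" using SV fV finite_subset by blast
  show ?case
  proof (cases "V = {}")
    case False
    define T where "T = V - S"
    define E_T where "E_T = {e\<in>E. e \<subseteq> T}"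
    have fT: "finite T" using fV by (simp add: T_def)
    have "S \<noteq> {}"
    proof
      assume "S = {}"
      then show False using dom \<open>V \<noteq> {}\<close> by (auto simp: deg_in_def)
    qed
    then have "card T < card V" using SV fV by (auto simp: T_def intro: psubset_card_mono)
    moreover have "simple_graph T E_T" using fT E2 by (auto simp: simple_graph_def E_T_def)
    ultimately have IH: "(k + 1) * card T ^ 2 \<le> alpha_k T E_T k * (2 * card E_T + (k + 1) * card T)"
      using less.hyps by blast
    have "alpha_k T E_T k \<le> alpha_k V E k"
      unfolding E_T_def by (rule alpha_k_induced_le[OF fV]) (auto simp: T_def)
    then have IH': "(k + 1) * card T ^ 2 \<le> alpha_k V E k * (2 * card E_T + (k + 1) * card T)"
      using IH le_trans mult_le_mono1 by blast
    have V_split: "V = S \<union> T" "S \<inter> T = {}" using SV by (auto simp: T_def)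
    have "edges_in E T + (k + 1) * card T \<le> edges_in E (S \<union> T)"
      by (rule edges_in_dominated[OF E2 fS fT]) (use dom in \<open>auto simp: T_def\<close>)
    moreover have "edges_in E (S \<union> T) = card E"
    proof -
      have "{e\<in>E. e \<subseteq> S \<union> T} = E" using EV V_split by auto
      then show ?thesis by (simp add: edges_in_def)
    qed
    ultimately have "card E_T + (k + 1) * card T \<le> card E"
      by (simp add: edges_in_def E_T_def)
    moreover have "card V = card S + card T"
      using V_split fS fT by (simp add: card_Un_disjoint)
    ultimately show ?thesis
      using lower_bound_step[OF IH'] card_le_alpha_k[OF fV S] by simp
  qed simp
qed

lemma alpha_k_ratio_lower_bound:
  assumes G: "simple_graph V E" and "V \<noteq> {}" and avg: "avg_degree V E \<le> d"
  shows "(real k + 1) / (d + real k + 1) \<le> real (alpha_k V E k) / real (card V)"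
proof -
  define n A m where "n = real (card V)" and "A = real (alpha_k V E k)" and "m = real (card E)"
  have n_pos: "n > 0" using G \<open>V \<noteq> {}\<close> by (auto simp: n_def simple_graph_def card_gt_0_iff)
  have "(real k + 1) * n^2 \<le> A * (2 * m + (real k + 1) * n)"
  proof -
    have "real ((k + 1) * card V ^ 2) \<le> real (alpha_k V E k * (2 * card E + (k + 1) * card V))"
      using alpha_k_lower_bound[OF G, of k] by (simp only: of_nat_le_iff)
    then show ?thesis unfolding n_def A_def m_def by (simp add: algebra_simps)
  qed
  also have "\<dots> \<le> A * (d * n + (real k + 1) * n)"
    using avg n_pos by (intro mult_left_mono) (auto simp: A_def avg_degree_def m_def n_def field_simps)
  finally have "((real k + 1) * n) * n \<le> (A * (d + real k + 1)) * n"
    by (simp add: power2_eq_square algebra_simps)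
  then have "(real k + 1) * n \<le> A * (d + real k + 1)" using n_pos by simp
  moreover have "d \<ge> 0"
    using avg order_trans[of 0 "avg_degree V E" d] by (simp add: avg_degree_def)
  ultimately show ?thesis using n_pos unfolding A_def n_def[symmetric]
    by (simp add: field_simps)
qed

theorem f_ratio_lower_bound:
  assumes "0 \<le> d"
  shows "(real k + 1) / (d + real k + 1) \<le> f_ratio k d"
  unfolding f_ratio_def
proof (rule cInf_greatest)
  have "simple_graph {0} {}" "avg_degree {0} {} \<le> d"
    using assms by (auto simp: simple_graph_def avg_degree_def)
  then show "{real (alpha_k V E k) / real (card V) | V E.
      simple_graph V E \<and> V \<noteq> {} \<and> avg_degree V E \<le> d} \<noteq> {}" by blast
qed (auto intro: alpha_k_ratio_lower_bound)

lemma f_ratio_le_graph: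
  assumes "simple_graph V E" "V \<noteq> {}" "avg_degree V E \<le> d"
  shows "f_ratio k d \<le> real (alpha_k V E k) / real (card V)"
  unfolding f_ratio_def
proof (rule cInf_lower)
  show "bdd_below {real (alpha_k V E k) / real (card V) | V E.
      simple_graph V E \<and> V \<noteq> {} \<and> avg_degree V E \<le> d}"
    by (rule bdd_belowI[of _ 0]) auto
qed (use assms in blast)

definition clique_minus :: "nat set \<Rightarrow> nat set \<Rightarrow> nat set set" where
  "clique_minus B T = {e. e \<subseteq> B \<and> card e = 2 \<and> \<not> e \<subseteq> T}"

lemma card_clique_minus:
  assumes "finite B" "T \<subseteq> B"
  shows "card (clique_minus B T) + (card T choose 2) = card B choose 2"
proof -
  have fT: "finite T" using finite_subset[OF assms(2,1)] .
  have split: "clique_minus B T = {e. e \<subseteq> B \<and> card e = 2} - {e. e \<subseteq> T \<and> card e = 2}"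
    unfolding clique_minus_def set_eq_iff by (simp only: mem_Collect_eq Diff_iff) iprover
  have sub: "{e. e \<subseteq> T \<and> card e = 2} \<subseteq> {e. e \<subseteq> B \<and> card e = 2}" using assms(2) by auto
  have fin: "finite {e. e \<subseteq> B \<and> card e = 2}"
    by (rule finite_subset[of _ "Pow B"]) (auto simp: assms(1))
  have "card {e. e \<subseteq> T \<and> card e = 2} \<le> card {e. e \<subseteq> B \<and> card e = 2}"
    by (rule card_mono[OF fin sub])
  moreover have "card (clique_minus B T)
      = card {e. e \<subseteq> B \<and> card e = 2} - card {e. e \<subseteq> T \<and> card e = 2}"
    unfolding split by (rule card_Diff_subset[OF finite_subset[OF sub fin] sub])
  ultimately show ?thesis using n_subsets[OF assms(1), of 2] n_subsets[OF fT, of 2] by simp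
qed

text \<open>A k-independent set contains at most k+1 vertices of a complete graph with a
  clique on at most k+1 vertices removed: any further vertex outside that clique would
  be adjacent to all the others.\<close>
lemma k_independent_meets_clique_minus:
  assumes S: "k_independent V E k S" and fS: "finite S"
    and sub: "clique_minus B T \<subseteq> E" and fT: "finite T" and cT: "card T \<le> k + 1"
  shows "card (S \<inter> B) \<le> k + 1"
proof (rule ccontr)
  assume "\<not> card (S \<inter> B) \<le> k + 1"
  then have big: "card (S \<inter> B) \<ge> k + 2" by simp
  have "\<not> S \<inter> B \<subseteq> T"
  proof
    assume "S \<inter> B \<subseteq> T"
    then have "card (S \<inter> B) \<le> card T" by (rule card_mono[OF fT])
    then show False using big cT by simp
  qed
  then obtain v where v: "v \<in> S" "v \<in> B" "v \<notin> T" by blast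
  have "S \<inter> B - {v} \<subseteq> {u\<in>S. {u, v} \<in> E}"
  proof
    fix u assume u: "u \<in> S \<inter> B - {v}"
    then have "u \<noteq> v" "u \<in> B" by auto
    then have "{u, v} \<in> clique_minus B T" using v by (simp add: clique_minus_def)
    then show "u \<in> {u\<in>S. {u, v} \<in> E}" using u sub by auto
  qed
  then have "card (S \<inter> B - {v}) \<le> deg_in E S v"
    unfolding deg_in_def by (rule card_mono[rotated]) (simp add: fS)
  moreover have "card (S \<inter> B - {v}) = card (S \<inter> B) - 1" using v fS by simp
  moreover have "deg_in E S v \<le> k" using S v(1) by (simp add: k_independent_iff_deg_in)
  ultimately show False using big by linarith
qed

section \<open>The extremal construction\<close>

text \<open>The extremal graph has blocks b = 0, ..., q of consecutive vertices starting at
  b(d+1); blocks b < q have d+1 vertices and block q has d+2.  Each block is a complete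
  graph minus the triangle on its first three vertices.\<close>
definition block_size :: "nat \<Rightarrow> nat \<Rightarrow> nat \<Rightarrow> nat" where
  "block_size q d b = (if b = q then d + 2 else d + 1)"

definition block :: "nat \<Rightarrow> nat \<Rightarrow> nat \<Rightarrow> nat set" where
  "block q d b = {b * (d + 1) ..< b * (d + 1) + block_size q d b}"

definition block_triangle :: "nat \<Rightarrow> nat \<Rightarrow> nat set" where
  "block_triangle d b = {b * (d + 1) ..< b * (d + 1) + 3}"

definition ext_vertices :: "nat \<Rightarrow> nat \<Rightarrow> nat set" where
  "ext_vertices q d = (\<Union>b\<le>q. block q d b)"

definition ext_edges :: "nat \<Rightarrow> nat \<Rightarrow> nat set set" where
  "ext_edges q d = (\<Union>b\<le>q. clique_minus (block q d b) (block_triangle d b))"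

lemma block_triangle_subset: "2 \<le> d \<Longrightarrow> block_triangle d b \<subseteq> block q d b"
  by (auto simp: block_triangle_def block_def block_size_def)

lemma blocks_disjoint:
  assumes "b \<le> q" "b' \<le> q" "b \<noteq> b'"
  shows "block q d b \<inter> block q d b' = {}"
proof -
  have "block q d b \<inter> block q d b' = {}" if "b < b'" "b' \<le> q" for b b'
  proof -
    have "b * (d + 1) + block_size q d b = (b + 1) * (d + 1)" using that by (simp add: block_size_def)
    also have "\<dots> \<le> b' * (d + 1)" using that by (intro mult_le_mono1) simp
    finally show ?thesis by (auto simp: block_def)
  qed
  then show ?thesis using assms by (metis Int_commute linorder_neqE_nat)
qed

lemma sum_blocks:
  fixes f :: "nat \<Rightarrow> nat"
  assumes "\<And>b. b < q \<Longrightarrow> f b = c"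
  shows "(\<Sum>b\<le>q. f b) = q * c + f q"
proof -
  have "{..q} = insert q {..<q}" by auto
  then have "(\<Sum>b\<le>q. f b) = f q + (\<Sum>b<q. f b)" by simp
  also have "(\<Sum>b<q. f b) = q * c" using assms by simp
  finally show ?thesis by simp
qed

lemma card_ext_vertices: "card (ext_vertices q d) = q * (d + 1) + (d + 2)"
proof -
  have "card (ext_vertices q d) = (\<Sum>b\<le>q. card (block q d b))"
    unfolding ext_vertices_def
    by (rule card_UN_disjoint) (use blocks_disjoint in \<open>auto simp: block_def\<close>)
  also have "\<dots> = q * (d + 1) + (d + 2)"
    by (subst sum_blocks[of _ _ "d + 1"]) (auto simp: block_def block_size_def)
  finally show ?thesis .
qed

lemma card_ext_edges:
  assumes "2 \<le> d"
  shows "card (ext_edges q d) + 3 * (q + 1) = q * (d + 1 choose 2) + (d + 2 choose 2)"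
proof -
  let ?E = "\<lambda>b. clique_minus (block q d b) (block_triangle d b)"
  have fin: "finite (?E b)" for b
    by (rule finite_subset[of _ "Pow (block q d b)"]) (auto simp: clique_minus_def block_def)
  have "?E b \<inter> ?E b' = {}" if "b \<le> q" "b' \<le> q" "b \<noteq> b'" for b b'
    using blocks_disjoint[OF that, of d] by (fastforce simp: clique_minus_def)
  then have card_sum: "card (ext_edges q d) = (\<Sum>b\<le>q. card (?E b))"
    unfolding ext_edges_def by (intro card_UN_disjoint) (auto simp: fin)
  have per_block: "card (?E b) + 3 = block_size q d b choose 2" for b
  proof -
    have "card (block_triangle d b) = 3" by (simp add: block_triangle_def)
    moreover have "(3::nat) choose 2 = 3" by (simp add: choose_two)
    ultimately show ?thesis
      using card_clique_minus[of "block q d b" "block_triangle d b"] block_triangle_subset[OF assms]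
      by (simp add: block_def)
  qed
  have "card (ext_edges q d) + 3 * (q + 1) = (\<Sum>b\<le>q. card (?E b) + 3)"
    unfolding card_sum by (simp add: sum.distrib)
  also have "\<dots> = (\<Sum>b\<le>q. block_size q d b choose 2)" by (simp only: per_block)
  also have "\<dots> = q * (d + 1 choose 2) + (d + 2 choose 2)"
    by (subst sum_blocks[of _ _ "d + 1 choose 2"]) (auto simp: block_size_def)
  finally show ?thesis .
qed

lemma ext_simple_graph: "simple_graph (ext_vertices q d) (ext_edges q d)"
  by (auto simp: simple_graph_def ext_vertices_def ext_edges_def clique_minus_def block_def)

text \<open>For d \<le> 4 + 6q the average degree of the construction is at most d: each block
  of size s contributes s(s-1) - 6 to the degree sum, and the extra vertex of the last
  block is paid for by the 6(q+1) missing triangle degrees.\<close>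
lemma ext_degree_sum:
  assumes "2 \<le> d" "d \<le> 4 + 6 * q"
  shows "2 * card (ext_edges q d) \<le> d * card (ext_vertices q d)"
proof -
  have two_choose: "2 * (n choose 2) = n * (n - 1)" for n :: nat
  proof -
    have "even (n * (n - 1))" by (cases "even n") auto
    then show ?thesis by (simp add: choose_two)
  qed
  have "2 * card (ext_edges q d) + 6 * (q + 1) = 2 * (card (ext_edges q d) + 3 * (q + 1))"
    by simp
  also have "\<dots> = q * (2 * (d + 1 choose 2)) + 2 * (d + 2 choose 2)"
    unfolding card_ext_edges[OF assms(1)] by (simp only: distrib_left mult.left_commute)
  also have "\<dots> = q * ((d + 1) * d) + (d + 2) * (d + 1)"
    by (simp only: two_choose) simp
  also have "(d + 2) * (d + 1) = d * (d + 2) + (d + 2)" by (simp add: algebra_simps)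
  also have "q * ((d + 1) * d) + (d * (d + 2) + (d + 2)) = d * card (ext_vertices q d) + (d + 2)"
    by (simp add: card_ext_vertices algebra_simps)
  finally show ?thesis using assms(2) by arith
qed

lemma ext_avg_degree:
  assumes "2 \<le> d" "d \<le> 4 + 6 * q"
  shows "avg_degree (ext_vertices q d) (ext_edges q d) \<le> real d"
proof -
  have "real (2 * card (ext_edges q d)) \<le> real (d * card (ext_vertices q d))"
    using ext_degree_sum[OF assms] by (simp only: of_nat_le_iff)
  moreover have "card (ext_vertices q d) > 0" by (simp add: card_ext_vertices)
  ultimately show ?thesis by (simp add: avg_degree_def divide_le_eq)
qed

text \<open>A 2-independent set of the construction has at most 3 vertices in each block.\<close>
lemma ext_alpha_2:
  assumes "2 \<le> d"
  shows "alpha_k (ext_vertices q d) (ext_edges q d) 2 \<le> 3 * (q + 1)"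
proof (rule alpha_k_le)
  show "finite (ext_vertices q d)" by (simp add: ext_vertices_def block_def)
  fix S assume S: "k_independent (ext_vertices q d) (ext_edges q d) 2 S"
  then have SV: "S \<subseteq> ext_vertices q d" by (simp add: k_independent_def)
  then have fS: "finite S" by (rule finite_subset) (simp add: ext_vertices_def block_def)
  have "S = (\<Union>b\<le>q. S \<inter> block q d b)" using SV by (auto simp: ext_vertices_def)
  moreover have "card (\<Union>b\<le>q. S \<inter> block q d b) = (\<Sum>b\<le>q. card (S \<inter> block q d b))"
  proof (rule card_UN_disjoint)
    show "\<forall>i\<in>{..q}. \<forall>j\<in>{..q}. i \<noteq> j \<longrightarrow> (S \<inter> block q d i) \<inter> (S \<inter> block q d j) = {}"
      using blocks_disjoint[of _ q _ d] by blast
  qed (use fS in auto)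
  ultimately have "card S = (\<Sum>b\<le>q. card (S \<inter> block q d b))" by simp
  also have "\<dots> \<le> (\<Sum>b\<le>q. 3)"
  proof (rule sum_mono)
    fix b assume "b \<in> {..q}"
    then have "clique_minus (block q d b) (block_triangle d b) \<subseteq> ext_edges q d"
      by (auto simp: ext_edges_def)
    then show "card (S \<inter> block q d b) \<le> 3"
      using k_independent_meets_clique_minus[OF S fS] by (simp add: block_triangle_def)
  qed
  finally show "card S \<le> 3 * (q + 1)" by simp
qed

theorem f_ratio_2_upper_bound:
  assumes "2 \<le> d" "d \<le> 4 + 6 * q"
  shows "f_ratio 2 (real d) \<le> 3 / (real d + 1 + 1 / (real q + 1))"
proof -
  let ?V = "ext_vertices q d" and ?E = "ext_edges q d"
  have n: "real (card ?V) = (real d + 1) * (real q + 1) + 1"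
    by (simp add: card_ext_vertices algebra_simps)
  have "?V \<noteq> {}" using card_ext_vertices[of q d] by auto
  then have "f_ratio 2 (real d) \<le> real (alpha_k ?V ?E 2) / real (card ?V)"
    by (rule f_ratio_le_graph[OF ext_simple_graph _ ext_avg_degree[OF assms]])
  also have "\<dots> \<le> 3 * (real q + 1) / ((real d + 1) * (real q + 1) + 1)"
    unfolding n using ext_alpha_2[OF assms(1), of q]
    by (intro divide_right_mono) (simp_all add: add_pos_nonneg)
  also have "\<dots> = 3 / (real d + 1 + 1 / (real q + 1))" by (simp add: field_simps)
  finally show ?thesis .
qed

theorem mainTheorem12:
  fixes q d :: nat
  assumes "2 \<le> d" and "d \<le> 4 + 6 * q"
  shows "3 / (real d + 3) \<le> f_ratio 2 (real d)
       \<and> f_ratio 2 (real d) \<le> 3 / (real d + 1 + 1 / (real q + 1))"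
proof
  show "3 / (real d + 3) \<le> f_ratio 2 (real d)"
    using f_ratio_lower_bound[of "real d" 2] by (simp add: add.assoc)
  show "f_ratio 2 (real d) \<le> 3 / (real d + 1 + 1 / (real q + 1))"
    using f_ratio_2_upper_bound[OF assms] .
qed

end
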